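(* Let $\mathbb{P}\subset\mathbb{R}^n$ be a polyhedron, $\mathbb{G}$ a nonempty face of $\mathbb{P}$, and $\mathfrak q\in(\mathbb{G}^* )^\circ|\mathbb{P}$. Then there is $r>0$ (depending on $\mathfrak q$) such that for all $\mathfrak n\in\mathbb{P}\setminus\mathbb{G}$ and $\mathfrak m\in\mathbb{G}$ one has $\mathrm{P}_{V(\mathbb{G})^\perp}(\mathfrak n-\mathfrak m)\ne0$ and $$\Big\langle\mathfrak q,\frac{\mathrm{P}_{V(\mathbb{G})^\perp}(\mathfrak n-\mathfrak m)}{|\mathrm{P}_{V(\mathbb{G})^\perp}(\mathfrak n-\mathfrak m)|}\Big\rangle\ge r.$$
   Context: A polyhedron is a finite intersection of closed half-spaces. For a polyhedron $\mathbb{Q}$ and a nonempty $\mathbb{G}\subset\mathbb{Q}$, $\mathbb{G}$ is a face of $\mathbb{Q}$ if there are $\mathfrak q,r$ with $\langle\mathfrak q,u\rangle=r$ on $\mathbb{G}$ and $>r$ on $\mathbb{Q}\setminus\mathbb{G}$; $(\mathbb{G}^* )^\circ|\mathbb{Q}=\{\mathfrak q\in\mathbb{R}^n\setminus\{0\}:\exists r,\langle\mathfrak q,u\rangle=r\ (u\in\mathbb{G}),\langle\mathfrak q,y\rangle>r\ (y\in\mathbb{Q}\setminus\mathbb{G})\}$. $V(\mathbb{G})=\mathrm{span}(\mathbb{G}-\mathfrak p)$ for any $\mathfrak p\in\mathbb{G}$ (the direction space of the affine hull), and $\mathrm{P}_{W}$ denotes orthogonal projection onto a subspace $W$. *)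

theory Defs
  imports "HOL-Analysis.Analysis"
begin

definition is_face :: "'a::euclidean_space set \<Rightarrow> 'a set \<Rightarrow> bool" where
  "is_face G Q \<longleftrightarrow> G \<noteq> {} \<and> G \<subseteq> Q \<and>
     (\<exists>q r. (\<forall>u\<in>G. inner q u = r) \<and> (\<forall>y\<in>Q - G. inner q y > r))"

definition dual_open :: "'a::euclidean_space set \<Rightarrow> 'a set \<Rightarrow> 'a set" where
  "dual_open G Q = {q. q \<noteq> 0 \<and>
     (\<exists>r. (\<forall>u\<in>G. inner q u = r) \<and> (\<forall>y\<in>Q - G. inner q y > r))}"

text \<open>Direction space of the affine hull: V(G) = span (G - p) for p in G.\<close>
definition dir_space :: "'a::euclidean_space set \<Rightarrow> 'a set" where
  "dir_space G = span ((\<lambda>u. u - (SOME p. p \<in> G)) ` G)"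

definition orth_proj :: "'a::euclidean_space set \<Rightarrow> 'a \<Rightarrow> 'a" where
  "orth_proj W x = closest_point W x"

end

theory Submission
  imports Defs
begin

text \<open>Fix a relative interior point \<open>m\<^sub>0\<close> of \<open>G\<close>. A constraint of \<open>P\<close> active at \<open>m\<^sub>0\<close> is
  active on all of \<open>G\<close>, so the component \<open>y\<close> of \<open>n - m\<close> orthogonal to \<open>V(G)\<close> lies in the
  cone \<open>K\<close> of directions allowed by the constraints active at \<open>m\<^sub>0\<close>, and
  \<open>\<langle>q, y\<rangle> = \<langle>q, n - m\<rangle> > 0\<close>. Conversely, for a nonzero \<open>d \<in> K \<inter> V(G)\<^sup>\<bottom>\<close> the points
  \<open>m\<^sub>0 + t d\<close> with small \<open>t > 0\<close> lie in \<open>P\<close> but not in \<open>G\<close> (as \<open>d \<notin> V(G)\<close>), whence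
  \<open>\<langle>q, d\<rangle> > 0\<close>; compactness of the unit vectors of \<open>K \<inter> V(G)\<^sup>\<bottom>\<close> makes this bound uniform.\<close>

lemma polyhedron_as_constraints:
  assumes "polyhedron P"
  shows "\<exists>F (a :: 'a set \<Rightarrow> 'a::euclidean_space) b. finite F \<and> P = {x. \<forall>h\<in>F. a h \<bullet> x \<le> b h}"
proof -
  from assms obtain F where F: "finite F" "P = \<Inter>F"
    and "\<forall>h\<in>F. \<exists>a b. a \<noteq> 0 \<and> h = {x. a \<bullet> x \<le> b}"
    by (auto simp: polyhedron_def)
  then obtain a b where "\<And>h. h \<in> F \<Longrightarrow> h = {x. a h \<bullet> x \<le> b h}"
    by metis
  with F have "P = {x. \<forall>h\<in>F. a h \<bullet> x \<le> b h}"
    by auto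
  with F(1) show ?thesis
    by (intro exI[of _ F] exI[of _ a] exI[of _ b] conjI)
qed

lemma closest_point_orthogonal_comp:
  fixes V :: "'a::euclidean_space set"
  assumes "subspace V"
  shows "closest_point (orthogonal_comp V) x \<in> orthogonal_comp V"
    and "x - closest_point (orthogonal_comp V) x \<in> V"
proof -
  let ?W = "orthogonal_comp V"
  let ?c = "closest_point ?W x"
  have sW: "subspace ?W" by (rule subspace_orthogonal_comp)
  have cW: "closed ?W" using sW closed_subspace by blast
  have cvW: "convex ?W" using sW subspace_imp_convex by blast
  show c: "?c \<in> ?W"
    using closest_point_in_set[OF cW] sW subspace_0 by blast
  have "z \<bullet> (x - ?c) = 0" if z: "z \<in> ?W" for z
  proof -
    have "?c + z \<in> ?W" "?c - z \<in> ?W"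
      using sW c z subspace_add subspace_diff by blast+
    from closest_point_dot[OF cvW cW this(1), of x] closest_point_dot[OF cvW cW this(2), of x]
    show ?thesis by (simp add: inner_diff_right inner_commute)
  qed
  then have "x - ?c \<in> orthogonal_comp ?W"
    by (auto simp: orthogonal_comp_def orthogonal_def)
  then show "x - ?c \<in> V"
    using orthogonal_comp_self[OF assms] by simp
qed

lemma subspace_dir_space: "subspace (dir_space G)"
  unfolding dir_space_def by (rule subspace_span)

lemma diff_mem_dir_space:
  assumes "u \<in> G" "w \<in> G"
  shows "u - w \<in> dir_space G"
proof -
  let ?p = "SOME p. p \<in> G"
  have "u - ?p \<in> dir_space G" "w - ?p \<in> dir_space G"
    using assms unfolding dir_space_def by (auto intro: span_base)
  from subspace_diff[OF subspace_dir_space this] show ?thesis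
    by simp
qed

lemma inner_dir_space_eq_0:
  assumes "\<forall>u\<in>G. a \<bullet> u = b" "v \<in> dir_space G"
  shows "a \<bullet> v = 0"
  using assms(2) unfolding dir_space_def
proof (induction rule: span_induct)
  case base
  show ?case using subspace_hyperplane[of a] by simp
next
  case (step x)
  then obtain u where u: "u \<in> G" "x = u - (SOME p. p \<in> G)" by auto
  from u(1) have "(SOME p. p \<in> G) \<in> G" by (rule someI)
  with u assms(1) show ?case by (simp add: inner_diff_right)
qed

lemma inner_orth_proj_dir_space_comp:
  assumes "\<forall>u\<in>G. a \<bullet> u = b" "m \<in> G"
  shows "a \<bullet> orth_proj (orthogonal_comp (dir_space G)) (n - m) = a \<bullet> n - b"
proof -
  let ?y = "orth_proj (orthogonal_comp (dir_space G)) (n - m)"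
  have "(n - m) - ?y \<in> dir_space G"
    unfolding orth_proj_def by (rule closest_point_orthogonal_comp(2)[OF subspace_dir_space])
  then have "a \<bullet> ((n - m) - ?y) = 0"
    by (rule inner_dir_space_eq_0[OF assms(1)])
  with assms show ?thesis by (simp add: inner_diff_right)
qed

lemma linear_constraint_tight_if_tight_at_rel_interior:
  fixes S :: "'a::euclidean_space set"
  assumes "convex S" "z \<in> rel_interior S" "\<forall>u\<in>S. a \<bullet> u \<le> b" "a \<bullet> z = b" "u \<in> S"
  shows "a \<bullet> u = b"
proof -
  obtain e where e: "e > 1" and w: "(1 - e) *\<^sub>R u + e *\<^sub>R z \<in> S"
    using convex_rel_interior_if2[OF assms(1,2)] hull_inc[OF assms(5)] by blast
  have "a \<bullet> ((1 - e) *\<^sub>R u + e *\<^sub>R z) \<le> b"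
    using assms(3) w by blast
  then have "(e - 1) * (b - a \<bullet> u) \<le> 0"
    using assms(4) by (simp add: inner_add_right algebra_simps)
  with e have "b \<le> a \<bullet> u"
    by (simp add: mult_le_0_iff)
  moreover have "a \<bullet> u \<le> b"
    using assms(3,5) by blast
  ultimately show ?thesis
    by simp
qed

definition feasible_cone :: "('i \<Rightarrow> 'a::real_inner) \<Rightarrow> ('i \<Rightarrow> real) \<Rightarrow> 'i set \<Rightarrow> 'a \<Rightarrow> 'a set"
  where "feasible_cone a b F x = {d. \<forall>h\<in>F. a h \<bullet> x = b h \<longrightarrow> a h \<bullet> d \<le> 0}"

lemma closed_feasible_cone: "closed (feasible_cone a b F x)"
proof -
  have "feasible_cone a b F x = (\<Inter>h\<in>{h\<in>F. a h \<bullet> x = b h}. {d. a h \<bullet> d \<le> 0})"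
    by (auto simp: feasible_cone_def)
  then show ?thesis
    by (simp add: closed_INT closed_halfspace_le)
qed

lemma scaleR_mem_feasible_cone:
  assumes "d \<in> feasible_cone a b F x" "0 \<le> c"
  shows "c *\<^sub>R d \<in> feasible_cone a b F x"
  using assms by (auto simp: feasible_cone_def mult_nonneg_nonpos)

lemma feasible_cone_small_step:
  fixes a :: "'i \<Rightarrow> 'a::real_inner"
  assumes "finite F" "\<forall>h\<in>F. a h \<bullet> x \<le> b h" "d \<in> feasible_cone a b F x"
  shows "\<exists>t>0. \<forall>h\<in>F. a h \<bullet> (x + t *\<^sub>R d) \<le> b h"
proof -
  have "\<forall>\<^sub>F t in at_right 0. a h \<bullet> (x + t *\<^sub>R d) \<le> b h" if "h \<in> F" for h
  proof (cases "a h \<bullet> x = b h")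
    case True
    with that assms(3) have "a h \<bullet> d \<le> 0"
      by (simp add: feasible_cone_def)
    from eventually_at_right_less[of 0] show ?thesis
      by eventually_elim (use True \<open>a h \<bullet> d \<le> 0\<close> in \<open>simp add: inner_add_right mult_nonneg_nonpos\<close>)
  next
    case False
    with that assms(2) have slack: "0 < b h - a h \<bullet> x" by force
    have "((\<lambda>t. t * (a h \<bullet> d)) \<longlongrightarrow> 0) (at_right (0::real))"
      by (auto intro!: tendsto_eq_intros)
    from order_tendstoD(2)[OF this slack] show ?thesis
      by eventually_elim (simp add: inner_add_right)
  qed
  then have "\<forall>\<^sub>F t in at_right 0. \<forall>h\<in>F. a h \<bullet> (x + t *\<^sub>R d) \<le> b h"
    using assms(1) by (simp add: eventually_ball_finite)
  then have "\<forall>\<^sub>F t in at_right 0. 0 < t \<and> (\<forall>h\<in>F. a h \<bullet> (x + t *\<^sub>R d) \<le> b h)"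
    by (rule eventually_conj[OF eventually_at_right_less])
  from eventually_happens'[OF _ this] show ?thesis
    by simp
qed

lemma orth_proj_diff_mem_feasible_cone:
  assumes P: "P = {x. \<forall>h\<in>F. a h \<bullet> x \<le> b h}"
    and "convex G" "G \<subseteq> P" "z \<in> rel_interior G" "n \<in> P" "m \<in> G"
  shows "orth_proj (orthogonal_comp (dir_space G)) (n - m) \<in> feasible_cone a b F z"
  unfolding feasible_cone_def
proof (intro CollectI ballI impI)
  fix h assume h: "h \<in> F" "a h \<bullet> z = b h"
  have "\<forall>u\<in>G. a h \<bullet> u = b h"
  proof
    fix u assume "u \<in> G"
    show "a h \<bullet> u = b h"
    proof (rule linear_constraint_tight_if_tight_at_rel_interior[OF assms(2,4) _ h(2) \<open>u \<in> G\<close>])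
      show "\<forall>u\<in>G. a h \<bullet> u \<le> b h"
        using assms(3) h(1) unfolding P by blast
    qed
  qed
  from inner_orth_proj_dir_space_comp[OF this assms(6)] assms(5) h(1)
  show "a h \<bullet> orth_proj (orthogonal_comp (dir_space G)) (n - m) \<le> 0"
    unfolding P by simp
qed

lemma face_feasible_direction_inner_pos:
  fixes a :: "'i \<Rightarrow> 'a::euclidean_space"
  assumes "finite F" and P: "P = {x. \<forall>h\<in>F. a h \<bullet> x \<le> b h}"
    and "\<forall>u\<in>G. q \<bullet> u = r" "\<forall>y\<in>P - G. r < q \<bullet> y" "m \<in> G" "G \<subseteq> P"
    and "d \<in> feasible_cone a b F m" "d \<notin> dir_space G"
  shows "0 < q \<bullet> d"
proof -
  have "\<forall>h\<in>F. a h \<bullet> m \<le> b h"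
    using assms(5,6) P by blast
  then obtain t where t: "t > 0" and zP: "m + t *\<^sub>R d \<in> P"
    using feasible_cone_small_step[OF assms(1) _ assms(7)] P by blast
  have "m + t *\<^sub>R d \<notin> G"
  proof
    assume "m + t *\<^sub>R d \<in> G"
    then have "(1 / t) *\<^sub>R ((m + t *\<^sub>R d) - m) \<in> dir_space G"
      using diff_mem_dir_space[OF _ assms(5)] subspace_dir_space subspace_scale by blast
    with t assms(8) show False by simp
  qed
  with zP assms(4) have "r < q \<bullet> (m + t *\<^sub>R d)"
    by blast
  also have "\<dots> = r + t * (q \<bullet> d)"
    using assms(3,5) by (simp add: inner_add_right)
  finally show ?thesis
    using t by (simp add: zero_less_mult_iff)
qed

lemma compact_inner_pos_bound:
  fixes S :: "'a::real_inner set"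
  assumes "compact S" "\<forall>x\<in>S. 0 < q \<bullet> x"
  shows "\<exists>c>0. \<forall>x\<in>S. c \<le> q \<bullet> x"
proof (cases "S = {}")
  case False
  have "continuous_on S (inner q)"
    by (intro continuous_intros)
  then obtain x0 where "x0 \<in> S" "\<forall>x\<in>S. q \<bullet> x0 \<le> q \<bullet> x"
    using continuous_attains_inf[OF assms(1) False] by blast
  with assms(2) show ?thesis by blast
qed (auto intro: exI[of _ 1])

lemma face_feasible_cone_inner_bound:
  fixes a :: "'i \<Rightarrow> 'a::euclidean_space"
  assumes "finite F" and P: "P = {x. \<forall>h\<in>F. a h \<bullet> x \<le> b h}"
    and "\<forall>u\<in>G. q \<bullet> u = r" "\<forall>y\<in>P - G. r < q \<bullet> y" "m \<in> G" "G \<subseteq> P"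
  shows "\<exists>c>0. \<forall>d \<in> feasible_cone a b F m \<inter> orthogonal_comp (dir_space G). c * norm d \<le> q \<bullet> d"
proof -
  let ?W = "orthogonal_comp (dir_space G)"
  let ?K = "feasible_cone a b F m \<inter> ?W"
  have "closed ?W"
    by (rule closed_subspace[OF subspace_orthogonal_comp])
  then have "closed ?K"
    by (rule closed_Int[OF closed_feasible_cone])
  then have "compact (?K \<inter> sphere 0 1)"
    by (rule closed_Int_compact[OF _ compact_sphere])
  moreover have "0 < q \<bullet> d" if d: "d \<in> ?K \<inter> sphere 0 1" for d
  proof (rule face_feasible_direction_inner_pos[OF assms])
    show "d \<in> feasible_cone a b F m"
      using d by simp
    show "d \<notin> dir_space G"
    proof
      assume "d \<in> dir_space G"
      with d have "d \<in> dir_space G \<inter> ?W"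
        by simp
      with orthogonal_Int_0[OF subspace_dir_space] have "d = 0"
        by blast
      with d show False
        by simp
    qed
  qed
  ultimately obtain c where "c > 0" and c: "\<forall>d \<in> ?K \<inter> sphere 0 1. c \<le> q \<bullet> d"
    using compact_inner_pos_bound by blast
  have "c * norm d \<le> q \<bullet> d" if d: "d \<in> ?K" for d
  proof (cases "d = 0")
    case False
    from d have "d /\<^sub>R norm d \<in> feasible_cone a b F m"
      by (simp add: scaleR_mem_feasible_cone)
    moreover from d have "d /\<^sub>R norm d \<in> ?W"
      by (simp add: subspace_scale[OF subspace_orthogonal_comp])
    moreover from False have "d /\<^sub>R norm d \<in> sphere 0 1"
      by simp
    ultimately have "c \<le> q \<bullet> (d /\<^sub>R norm d)"
      using c by blast
    with False show ?thesis
      by (simp add: field_simps)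
  qed simp
  with \<open>c > 0\<close> show ?thesis
    by blast
qed

lemma convex_face:
  assumes "convex P" "is_face G P"
  shows "convex G"
proof -
  from assms(2) obtain q r where "G \<subseteq> P" "\<forall>u\<in>G. q \<bullet> u = r" "\<forall>y\<in>P - G. r < q \<bullet> y"
    by (auto simp: is_face_def)
  then have "G = P \<inter> {x. q \<bullet> x = r}"
    by force
  with assms(1) show ?thesis
    by (simp add: convex_Int convex_hyperplane)
qed

theorem mainTheorem15:
  fixes P G :: "'a::euclidean_space set" and q :: 'a
  assumes "polyhedron P"
    and "is_face G P"
    and "q \<in> dual_open G P"
  shows "\<exists>r>0. \<forall>n\<in>P - G. \<forall>m\<in>G.
           orth_proj (orthogonal_comp (dir_space G)) (n - m) \<noteq> 0 \<and>
           inner q (orth_proj (orthogonal_comp (dir_space G)) (n - m)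
                    /\<^sub>R norm (orth_proj (orthogonal_comp (dir_space G)) (n - m))) \<ge> r"
proof -
  from assms(2) have "G \<noteq> {}" and GP: "G \<subseteq> P" by (auto simp: is_face_def)
  from assms(3) obtain r0 where qG: "\<forall>u\<in>G. q \<bullet> u = r0" and qP: "\<forall>y\<in>P - G. r0 < q \<bullet> y"
    by (auto simp: dual_open_def)
  from polyhedron_as_constraints[OF assms(1)] obtain F and a :: "'a set \<Rightarrow> 'a" and b
    where F: "finite F" and P: "P = {x. \<forall>h\<in>F. a h \<bullet> x \<le> b h}"
    by blast
  have "convex G"
    by (rule convex_face[OF polyhedron_imp_convex[OF assms(1)] assms(2)])
  obtain m0 where m0: "m0 \<in> rel_interior G"
    using rel_interior_eq_empty[OF \<open>convex G\<close>] \<open>G \<noteq> {}\<close> by blast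
  then have "m0 \<in> G"
    using rel_interior_subset by blast
  obtain c where "c > 0"
    and c: "\<forall>d \<in> feasible_cone a b F m0 \<inter> orthogonal_comp (dir_space G). c * norm d \<le> q \<bullet> d"
    using face_feasible_cone_inner_bound[OF F P qG qP \<open>m0 \<in> G\<close> GP] by blast
  define proj where "proj = orth_proj (orthogonal_comp (dir_space G))"
  have "proj (n - m) \<noteq> 0 \<and> c \<le> q \<bullet> (proj (n - m) /\<^sub>R norm (proj (n - m)))"
    if n: "n \<in> P - G" and m: "m \<in> G" for n m
  proof -
    let ?y = "proj (n - m)"
    have "0 < q \<bullet> ?y"
      using inner_orth_proj_dir_space_comp[OF qG m] qP n unfolding proj_def by simp
    moreover have "?y \<in> orthogonal_comp (dir_space G)"
      unfolding proj_def orth_proj_def by (rule closest_point_orthogonal_comp(1)[OF subspace_dir_space])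
    moreover have "?y \<in> feasible_cone a b F m0"
      using orth_proj_diff_mem_feasible_cone[OF P \<open>convex G\<close> GP m0] n m unfolding proj_def by blast
    ultimately have "?y \<noteq> 0" "c * norm ?y \<le> q \<bullet> ?y"
      using c by (force, blast)
    then show ?thesis
      by (simp add: field_simps)
  qed
  with \<open>c > 0\<close> show ?thesis
    unfolding proj_def by blast
qed

end
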